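(* Let $\mathbf m\in\mathcal M$, $z_0\in\mathbb C\setminus\operatorname{supp}\mathbf m$ with $u:=G_{\mathbf m}(z_0)\ne0$, and $c\in\mathbb R$. Then the set $\{z\in\mathbb C\setminus\operatorname{supp}\mathbf m:\operatorname{Re}\mathcal S_u(z)>c\}$ has exactly one unbounded connected component, and likewise $\{z\in\mathbb C\setminus\operatorname{supp}\mathbf m:\operatorname{Re}\mathcal S_u(z)<c\}$ has exactly one unbounded connected component.
   Context: $\mathcal M$ is the set of compactly supported Borel probability measures on $\mathbb R$; $G_{\mathbf m}(z)=\int\frac{d\mathbf m(x)}{z-x}$. For $u\ne0$, $\operatorname{Re}\mathcal S_u(z)=\operatorname{Re}(zu)-\int\log|z-x|\,d\mathbf m(x)-\log|u|$ (the real part of $\mathcal S_u(z)=zu-\int\log(z-x)d\mathbf m(x)-\log u$). *)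

theory Defs
  imports "HOL-Probability.Probability"
begin

definition msupp :: "real measure \<Rightarrow> real set" where
  "msupp m = {x. \<forall>e>0. emeasure m (ball x e) \<noteq> 0}"

definition cs_prob :: "real measure \<Rightarrow> bool" where
  "cs_prob m \<longleftrightarrow> prob_space m \<and> sets m = sets borel \<and> compact (msupp m)"

definition cauchy_G :: "real measure \<Rightarrow> complex \<Rightarrow> complex" where
  "cauchy_G m z = (LINT x|m. 1 / (z - complex_of_real x))"

text \<open>Real part of S_u(z) = z u - int log(z - x) dm(x) - log u.\<close>
definition ReS :: "real measure \<Rightarrow> complex \<Rightarrow> complex \<Rightarrow> real" where
  "ReS m u z = Re (z * u) - (LINT x|m. ln (cmod (z - complex_of_real x))) - ln (cmod u)"

end

theory Submission
  imports Defs "HOL-Real_Asymp.Real_Asymp"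
begin

text \<open>Rotate the plane by a unit d with d u = |u|, so that z = w d turns Re S_u into
  |u| Re w - g w - ln |u|, where g is the logarithmic potential of m. Outside a disc of radius
  M containing the support, ln (|w| - M) \<le> g w \<le> ln (|w| + M) and g grows by at most
  |v - w| / (|w| - M) from w to v, so |u| Re w - g w is linear up to logarithmic errors.
  Far out, the superlevel set therefore contains a half-strip around the positive real axis,
  its points have Re w > 0, and it is stable under moving to the right; so every far point is
  joined to a fixed point of the positive real axis by a horizontal, a vertical and a real
  segment. The sublevel set is symmetric: it contains a left half-plane and is stable under
  moving to the left, as long as one stays far out, which holds because its far points with
  Re w > 0 are far from the real axis. An unbounded set whose far points all lie in one
  component has exactly one unbounded component.\<close>

definition connected_at_infinity :: "'a::real_normed_vector set \<Rightarrow> bool" where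
  "connected_at_infinity S \<longleftrightarrow>
     (\<exists>R. \<forall>z\<in>S. \<forall>w\<in>S. R \<le> norm z \<longrightarrow> R \<le> norm w \<longrightarrow> connected_component S z w)"

lemma connected_at_infinityI:
  assumes "\<And>w. w \<in> S \<Longrightarrow> R \<le> norm w \<Longrightarrow> connected_component S w p"
  shows "connected_at_infinity S"
  unfolding connected_at_infinity_def
  by (meson assms connected_component_sym connected_component_trans)

lemma unbounded_far_point:
  assumes "\<not> bounded S"
  obtains z where "z \<in> S" "r < norm z"
  using assms unfolding bounded_iff by (meson not_le)

lemma unique_unbounded_component:
  assumes "connected_at_infinity S" and "\<not> bounded S"
  shows "\<exists>!C. C \<in> components S \<and> \<not> bounded C"
proof -
  obtain R where R: "\<And>z w. z \<in> S \<Longrightarrow> w \<in> S \<Longrightarrow> R \<le> norm z \<Longrightarrow> R \<le> norm w \<Longrightarrow>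
      connected_component S z w"
    using assms(1) unfolding connected_at_infinity_def by blast
  obtain p where p: "p \<in> S" "R < norm p"
    using assms(2) by (rule unbounded_far_point)
  show ?thesis
  proof (rule ex1I[of _ "connected_component_set S p"])
    have "S \<subseteq> connected_component_set S p \<union> cball 0 R"
      using R p by fastforce
    then have "\<not> bounded (connected_component_set S p)"
      using assms(2) bounded_Un bounded_cball bounded_subset by metis
    then show "connected_component_set S p \<in> components S \<and> \<not> bounded (connected_component_set S p)"
      using p by (simp add: componentsI)
  next
    fix C assume C: "C \<in> components S \<and> \<not> bounded C"
    then obtain z where z: "z \<in> C" "R < norm z"
      by (blast elim: unbounded_far_point)
    have "C = connected_component_set S z"
      using C z by (metis components_iff connected_component_eq mem_Collect_eq)
    also have "\<dots> = connected_component_set S p"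
      using R p z C by (intro connected_component_eq) (auto simp: in_components_subset[THEN subsetD])
    finally show "C = connected_component_set S p" .
  qed
qed

lemma connected_component_continuous_image:
  assumes "continuous_on S f" and "connected_component S a b"
  shows "connected_component (f ` S) (f a) (f b)"
proof -
  obtain T where T: "connected T" "T \<subseteq> S" "a \<in> T" "b \<in> T"
    using assms(2) unfolding connected_component_def by blast
  show ?thesis
  proof (rule connected_componentI[of "f ` T"])
    show "connected (f ` T)"
      using T assms(1) by (meson connected_continuous_image continuous_on_subset)
  qed (use T in auto)
qed

lemma unique_unbounded_component_norm_preserving_image:
  assumes f: "continuous_on T f" and norm_f: "\<And>x. norm (f x) = norm x"
    and "connected_at_infinity T" and "\<not> bounded T"
  shows "\<exists>!C. C \<in> components (f ` T) \<and> \<not> bounded C"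
proof (rule unique_unbounded_component)
  obtain R where "\<forall>z\<in>T. \<forall>w\<in>T. R \<le> norm z \<longrightarrow> R \<le> norm w \<longrightarrow> connected_component T z w"
    using assms(3) unfolding connected_at_infinity_def by blast
  then show "connected_at_infinity (f ` T)"
    unfolding connected_at_infinity_def
    by (intro exI[of _ R]) (auto simp: norm_f intro: connected_component_continuous_image[OF f])
  show "\<not> bounded (f ` T)"
    using assms(4) by (simp add: bounded_iff norm_f)
qed

lemma connected_component_closed_segment:
  fixes a b :: "'a::real_normed_vector"
  assumes "closed_segment a b \<subseteq> S"
  shows "connected_component S a b"
  using assms by (intro connected_componentI[of "closed_segment a b"] connected_segment) auto

lemma connected_component_staircase:
  fixes w :: complex
  assumes "\<And>t. t \<in> closed_segment (Re w) X \<Longrightarrow> Complex t (Im w) \<in> S"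
    and "\<And>s. s \<in> closed_segment (Im w) 0 \<Longrightarrow> Complex X s \<in> S"
    and "\<And>t. t \<in> closed_segment X P \<Longrightarrow> of_real t \<in> S"
  shows "connected_component S w (of_real P)"
proof -
  note connected_component_trans[trans]
  have "connected_component S w (Complex X (Im w))"
    using assms(1) by (intro connected_component_closed_segment)
      (auto simp: closed_segment_same_Im; metis complex.collapse)
  also have "connected_component S (Complex X (Im w)) (of_real X)"
    using assms(2) by (intro connected_component_closed_segment)
      (auto simp: closed_segment_same_Re; metis complex.collapse)
  also have "connected_component S (of_real X) (of_real P)"
    using assms(3) by (intro connected_component_closed_segment) (auto simp: closed_segment_of_real)
  finally show ?thesis .
qed

lemma msupp_AE:
  assumes "sets m = sets borel"
  shows "AE x in m. x \<in> msupp m"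
proof -
  define \<F> where "\<F> = {ball x e |x e. emeasure m (ball x e) = 0}"
  obtain \<F>' where \<F>': "\<F>' \<subseteq> \<F>" "countable \<F>'" "\<Union>\<F>' = \<Union>\<F>"
    using Lindelof[of \<F>] unfolding \<F>_def by blast
  have "(\<Union>B\<in>\<F>'. B) \<in> null_sets m"
    using \<F>' by (intro null_sets_UN') (auto simp: \<F>_def null_sets_def assms)
  moreover have "- msupp m \<subseteq> \<Union>\<F>"
    by (force simp: msupp_def \<F>_def)
  ultimately show ?thesis
    using \<F>'(3) by (intro AE_I'[of "\<Union>\<F>'"]) auto
qed

lemma ln_norm_diff_le:
  fixes y z v :: complex
  assumes y: "cmod y \<le> M" and z: "M < cmod z" and v: "M < cmod v"
  shows "ln (cmod (v - y)) - ln (cmod (z - y)) \<le> cmod (v - z) / (cmod z - M)"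
proof -
  define A where "A = cmod (z - y)"
  define B where "B = cmod (v - y)"
  have A: "cmod z - M \<le> A" and B: "cmod v - M \<le> B"
    using norm_triangle_ineq2[of z y] norm_triangle_ineq2[of v y] y unfolding A_def B_def by auto
  then have "0 < A" "0 < B"
    using z v by auto
  have "B \<le> A + cmod (v - z)"
    using norm_triangle_ineq[of "z - y" "v - z"] unfolding A_def B_def by simp
  have "ln B - ln A = ln (B / A)"
    using \<open>0 < A\<close> \<open>0 < B\<close> by (simp add: ln_div)
  also have "\<dots> \<le> B / A - 1"
    using \<open>0 < A\<close> \<open>0 < B\<close> by (intro ln_le_minus_one) simp
  also have "\<dots> = (B - A) / A"
    using \<open>0 < A\<close> by (simp add: field_simps)
  also have "\<dots> \<le> cmod (v - z) / A"
    using \<open>0 < A\<close> \<open>B \<le> A + cmod (v - z)\<close> by (intro divide_right_mono) auto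
  also have "\<dots> \<le> cmod (v - z) / (cmod z - M)"
    using A z by (intro divide_left_mono) auto
  finally show ?thesis
    unfolding A_def B_def .
qed

definition log_potential :: "real measure \<Rightarrow> complex \<Rightarrow> real" where
  "log_potential m z = (LINT x|m. ln (cmod (z - of_real x)))"

context
  fixes m :: "real measure" and M :: real
  assumes prob: "prob_space m" and borel: "sets m = sets borel"
    and bounded_AE: "AE x in m. \<bar>x\<bar> \<le> M"
begin

lemma ln_dist_bounds_AE:
  assumes "M < cmod z"
  shows "AE x in m. ln (cmod z - M) \<le> ln (cmod (z - of_real x))
                  \<and> ln (cmod (z - of_real x)) \<le> ln (cmod z + M)"
  using bounded_AE
proof eventually_elim
  case (elim x)
  have "cmod z - M \<le> cmod (z - of_real x)" "cmod (z - of_real x) \<le> cmod z + M"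
    using norm_triangle_ineq2[of z "of_real x"] norm_triangle_ineq4[of z "of_real x"] elim
    by auto
  then show ?case
    using assms by (intro conjI ln_mono) auto
qed

lemma integrable_ln_dist:
  assumes "M < cmod z"
  shows "integrable m (\<lambda>x. ln (cmod (z - of_real x)))"
proof (rule finite_measure.integrable_const_bound)
  show "finite_measure m"
    using prob by (simp add: prob_space_def)
  show "AE x in m. norm (ln (cmod (z - of_real x))) \<le> max \<bar>ln (cmod z - M)\<bar> \<bar>ln (cmod z + M)\<bar>"
    using ln_dist_bounds_AE[OF assms] by eventually_elim auto
  have "(\<lambda>x. ln (cmod (z - of_real x))) \<in> borel_measurable borel"
    by measurable
  then show "(\<lambda>x. ln (cmod (z - of_real x))) \<in> borel_measurable m"
    using measurable_cong_sets[OF borel refl] by blast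
qed

lemma log_potential_bounds:
  assumes "M < cmod z"
  shows "ln (cmod z - M) \<le> log_potential m z \<and> log_potential m z \<le> ln (cmod z + M)"
proof -
  interpret prob_space m by (fact prob)
  note integrable = integrable_ln_dist[OF assms] and bounds = ln_dist_bounds_AE[OF assms]
  have "(LINT x|m. ln (cmod z - M)) \<le> log_potential m z"
    unfolding log_potential_def by (rule integral_mono_AE) (use integrable bounds in auto)
  moreover have "log_potential m z \<le> (LINT x|m. ln (cmod z + M))"
    unfolding log_potential_def by (rule integral_mono_AE) (use integrable bounds in auto)
  ultimately show ?thesis
    by (simp add: prob_space)
qed

lemma log_potential_diff_le:
  assumes z: "M < cmod z" and v: "M < cmod v"
  shows "log_potential m v - log_potential m z \<le> cmod (v - z) / (cmod z - M)"
proof -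
  interpret prob_space m by (fact prob)
  have "AE x in m. ln (cmod (v - of_real x)) - ln (cmod (z - of_real x)) \<le> cmod (v - z) / (cmod z - M)"
    using bounded_AE by eventually_elim (rule ln_norm_diff_le, use z v in auto)
  then have "(LINT x|m. ln (cmod (v - of_real x)) - ln (cmod (z - of_real x)))
      \<le> (LINT x|m. cmod (v - z) / (cmod z - M))"
    using integrable_ln_dist[OF v] integrable_ln_dist[OF z] by (intro integral_mono_AE) auto
  then show ?thesis
    unfolding log_potential_def using integrable_ln_dist[OF z] integrable_ln_dist[OF v]
    by (simp add: prob_space)
qed

end

lemma eventually_linear_dominates_ln:
  fixes a K k :: real
  assumes "0 < a"
  shows "eventually (\<lambda>s. k < a * s - ln (s + K)) at_top"
  using assms by real_asymp

lemma cmod_le_same_Im: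
  assumes "\<bar>Re w\<bar> \<le> \<bar>Re v\<bar>" and "Im w = Im v"
  shows "cmod w \<le> cmod v"
  using assms unfolding cmod_def by (simp add: abs_le_square_iff)

text \<open>The rotated logarithmic potential g, abstracted to the growth properties used: a = |u|,
  all of the support lies in the disc of radius M, and D is the complement of the rotated
  support.\<close>

locale log_growth =
  fixes a M :: real and g :: "complex \<Rightarrow> real" and D :: "complex set"
  assumes a_pos: "0 < a" and M_nonneg: "0 \<le> M"
    and far_in_D: "\<And>w. M < cmod w \<Longrightarrow> w \<in> D"
    and g_bounds: "\<And>w. M < cmod w \<Longrightarrow> ln (cmod w - M) \<le> g w \<and> g w \<le> ln (cmod w + M)"
    and g_diff_le: "\<And>v w. M < cmod w \<Longrightarrow> M < cmod v \<Longrightarrow> g v - g w \<le> cmod (v - w) / (cmod w - M)"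
begin

definition superlevel :: "real \<Rightarrow> complex set" where
  "superlevel k = {w \<in> D. k < a * Re w - g w}"

definition sublevel :: "real \<Rightarrow> complex set" where
  "sublevel k = {w \<in> D. a * Re w - g w < k}"

lemma gt_M_if_far: "M + 1 / a \<le> cmod w \<Longrightarrow> M < cmod w"
  using a_pos by (smt (verit) divide_pos_pos)

lemma g_shift_le:
  assumes w: "M + 1 / a \<le> cmod w" and "M < cmod (w + of_real t)" and t: "0 \<le> t"
  shows "g (w + of_real t) - g w \<le> a * t"
proof -
  have "M < cmod w"
    using w by (rule gt_M_if_far)
  then have "g (w + of_real t) - g w \<le> t * (1 / (cmod w - M))"
    using g_diff_le[of w "w + of_real t"] assms(2) t by simp
  also have "\<dots> \<le> t * a"
    using w a_pos \<open>M < cmod w\<close> t by (intro mult_left_mono) (simp_all add: field_simps)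
  finally show ?thesis
    by (simp add: mult.commute)
qed

lemma superlevel_contains_far_strip:
  obtains N where "\<And>w. N \<le> Re w \<Longrightarrow> \<bar>Im w\<bar> \<le> Y \<Longrightarrow> w \<in> superlevel k"
proof -
  obtain N0 where N0: "\<And>s. N0 \<le> s \<Longrightarrow> k < a * s - ln (s + (Y + M))"
    using eventually_linear_dominates_ln[OF a_pos] unfolding eventually_at_top_linorder by blast
  show ?thesis
  proof (rule that[of "max N0 (M + 1)"])
    fix w assume Re: "max N0 (M + 1) \<le> Re w" and Im: "\<bar>Im w\<bar> \<le> Y"
    have w: "M < cmod w"
      using Re abs_Re_le_cmod[of w] by linarith
    have "cmod w + M \<le> Re w + (Y + M)"
      using cmod_le[of w] Re Im M_nonneg by linarith
    then have "ln (cmod w + M) \<le> ln (Re w + (Y + M))"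
      using w M_nonneg by (intro ln_mono) auto
    then have "g w \<le> ln (Re w + (Y + M))"
      using g_bounds[OF w] by linarith
    then show "w \<in> superlevel k"
      using N0[of "Re w"] Re far_in_D[OF w] unfolding superlevel_def by auto
  qed
qed

lemma superlevel_far_Re_pos:
  assumes "w \<in> superlevel k" and "M + exp (- k) \<le> cmod w"
  shows "0 < Re w"
proof -
  have w: "M < cmod w"
    using assms(2) exp_gt_zero[of "- k"] by linarith
  have "- k \<le> ln (cmod w - M)"
    using assms(2) w by (subst ln_ge_iff) auto
  then have "0 < a * Re w"
    using assms(1) g_bounds[OF w] unfolding superlevel_def by auto
  then show ?thesis
    using a_pos by (simp add: zero_less_mult_iff)
qed

lemma superlevel_shift_right:
  assumes "w \<in> superlevel k" and "M + 1 / a \<le> cmod w" and "0 \<le> Re w" and "0 \<le> t"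
  shows "w + of_real t \<in> superlevel k"
proof -
  have "cmod w \<le> cmod (w + of_real t)"
    using assms(3,4) by (intro cmod_le_same_Im) auto
  moreover have "M < cmod w"
    using assms(2) by (rule gt_M_if_far)
  ultimately have "M < cmod (w + of_real t)"
    by linarith
  then show ?thesis
    using g_shift_le[OF assms(2) _ assms(4)] assms(1) far_in_D
    unfolding superlevel_def by (auto simp: algebra_simps)
qed

lemma connected_at_infinity_superlevel: "connected_at_infinity (superlevel k)"
proof -
  obtain P where P: "\<And>w. P \<le> Re w \<Longrightarrow> \<bar>Im w\<bar> \<le> 0 \<Longrightarrow> w \<in> superlevel k"
    using superlevel_contains_far_strip[where Y = 0 and k = k] by blast
  show ?thesis
  proof (rule connected_at_infinityI[where R = "M + 1 / a + exp (- k)" and p = "of_real P"])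
    fix w assume w: "w \<in> superlevel k" "M + 1 / a + exp (- k) \<le> norm w"
    have "0 < 1 / a" "0 < exp (- k)"
      using a_pos by auto
    then have far: "M + 1 / a \<le> cmod w" "0 < Re w"
      using w superlevel_far_Re_pos[of w k] by linarith+
    obtain N where N: "\<And>v. N \<le> Re v \<Longrightarrow> \<bar>Im v\<bar> \<le> \<bar>Im w\<bar> \<Longrightarrow> v \<in> superlevel k"
      using superlevel_contains_far_strip[where Y = "\<bar>Im w\<bar>" and k = k] by blast
    define X where "X = max (max (Re w) P) N"
    have X: "Re w \<le> X" "P \<le> X" "N \<le> X"
      unfolding X_def by auto
    show "connected_component (superlevel k) w (of_real P)"
    proof (rule connected_component_staircase[where X = X])
      fix t assume "t \<in> closed_segment (Re w) X"
      then have "w + of_real (t - Re w) \<in> superlevel k"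
        using w far by (intro superlevel_shift_right) (use X in \<open>auto simp: closed_segment_eq_real_ivl\<close>)
      moreover have "w + of_real (t - Re w) = Complex t (Im w)"
        by (simp add: complex_eq_iff)
      ultimately show "Complex t (Im w) \<in> superlevel k"
        by simp
    next
      fix s assume "s \<in> closed_segment (Im w) 0"
      then show "Complex X s \<in> superlevel k"
        by (intro N) (use X in \<open>auto simp: closed_segment_eq_real_ivl split: if_splits\<close>)
    next
      fix t assume "t \<in> closed_segment X P"
      then show "of_real t \<in> superlevel k"
        by (intro P) (use X in \<open>auto simp: closed_segment_eq_real_ivl split: if_splits\<close>)
    qed
  qed
qed

lemma unbounded_superlevel: "\<not> bounded (superlevel k)"
proof -
  obtain P where P: "\<And>w. P \<le> Re w \<Longrightarrow> \<bar>Im w\<bar> \<le> 0 \<Longrightarrow> w \<in> superlevel k"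
    using superlevel_contains_far_strip[where Y = 0 and k = k] by blast
  have "\<exists>w\<in>superlevel k. B < norm w" for B
    using P[of "of_real (max P (B + 1))"] by (intro bexI[of _ "of_real (max P (B + 1))"]) auto
  then show ?thesis
    unfolding bounded_iff by (meson not_le)
qed

lemma sublevel_contains_left_halfplane:
  obtains N where "\<And>w. Re w \<le> - N \<Longrightarrow> w \<in> sublevel k"
proof
  fix w assume Re: "Re w \<le> - max (M + 1) (\<bar>k\<bar> / a + 1)"
  have "M + 1 \<le> cmod w"
    using Re abs_Re_le_cmod[of w] by linarith
  then have w: "M < cmod w" and "0 \<le> ln (cmod w - M)"
    by auto
  then have "0 \<le> g w"
    using g_bounds[OF w] by linarith
  have "a * (\<bar>k\<bar> / a + 1) \<le> a * - Re w"
    using Re a_pos by (intro mult_left_mono) auto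
  moreover have "a * (\<bar>k\<bar> / a + 1) = \<bar>k\<bar> + a"
    using a_pos by (simp add: field_simps)
  ultimately have "a * Re w < k"
    using a_pos by linarith
  then show "w \<in> sublevel k"
    using far_in_D[OF w] \<open>0 \<le> g w\<close> unfolding sublevel_def by auto
qed

lemma sublevel_far_right_Im:
  obtains R where "\<And>w. w \<in> sublevel k \<Longrightarrow> R \<le> cmod w \<Longrightarrow> 0 < Re w \<Longrightarrow> B \<le> \<bar>Im w\<bar>"
proof -
  obtain N where N: "\<And>s. N \<le> s \<Longrightarrow> k + a * B < a * s - ln (s + M)"
    using eventually_linear_dominates_ln[OF a_pos] unfolding eventually_at_top_linorder by blast
  show ?thesis
  proof (rule that[of "max N (M + 1)"], rule ccontr)
    fix w assume w: "w \<in> sublevel k" "max N (M + 1) \<le> cmod w" "0 < Re w" "\<not> B \<le> \<bar>Im w\<bar>"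
    have "M < cmod w"
      using w(2) by linarith
    have "cmod w - B < Re w"
      using cmod_le[of w] w(3,4) by linarith
    then have "a * (cmod w - B) < a * Re w"
      using a_pos by simp
    also have "\<dots> < k + ln (cmod w + M)"
      using w(1) g_bounds[OF \<open>M < cmod w\<close>] unfolding sublevel_def by auto
    finally show False
      using N[of "cmod w"] w(2) by (simp add: algebra_simps)
  qed
qed

lemma sublevel_shift_left:
  assumes "w \<in> sublevel k" and "M < cmod w" and "M + 1 / a \<le> cmod (w - of_real t)" and "0 \<le> t"
  shows "w - of_real t \<in> sublevel k"
proof -
  have "g w - g (w - of_real t) \<le> a * t"
    using g_shift_le[OF assms(3) _ assms(4)] assms(2) by simp
  moreover have "M < cmod (w - of_real t)"
    using assms(3) by (rule gt_M_if_far)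
  ultimately show ?thesis
    using assms(1) far_in_D unfolding sublevel_def by (auto simp: algebra_simps)
qed

lemma connected_at_infinity_sublevel: "connected_at_infinity (sublevel k)"
proof -
  obtain N where N: "\<And>w. Re w \<le> - N \<Longrightarrow> w \<in> sublevel k"
    using sublevel_contains_left_halfplane[where k = k] by blast
  obtain R where R: "\<And>w. w \<in> sublevel k \<Longrightarrow> R \<le> cmod w \<Longrightarrow> 0 < Re w \<Longrightarrow> M + 1 / a \<le> \<bar>Im w\<bar>"
    using sublevel_far_right_Im[where k = k and B = "M + 1 / a"] by blast
  show ?thesis
  proof (rule connected_at_infinityI[where R = "max R (M + 1 / a)" and p = "of_real (- N)"])
    fix w assume w: "w \<in> sublevel k" "max R (M + 1 / a) \<le> norm w"
    have "M < cmod w"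
      using w(2) by (intro gt_M_if_far) simp
    define X where "X = max N \<bar>Re w\<bar>"
    have X: "- X \<le> Re w" "N \<le> X"
      unfolding X_def by auto
    show "connected_component (sublevel k) w (of_real (- N))"
    proof (rule connected_component_staircase[where X = "- X"])
      fix t assume "t \<in> closed_segment (Re w) (- X)"
      then have t: "t \<le> Re w"
        using X by (auto simp: closed_segment_eq_real_ivl split: if_splits)
      have "M + 1 / a \<le> cmod (Complex t (Im w))"
      proof (cases "Re w \<le> 0")
        case True
        then have "cmod w \<le> cmod (Complex t (Im w))"
          using t by (intro cmod_le_same_Im) auto
        then show ?thesis
          using w(2) by linarith
      next
        case False
        then show ?thesis
          using R[OF w(1)] w(2) abs_Im_le_cmod[of "Complex t (Im w)"] by force
      qed
      moreover have "w - of_real (Re w - t) = Complex t (Im w)"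
        by (simp add: complex_eq_iff)
      ultimately show "Complex t (Im w) \<in> sublevel k"
        using sublevel_shift_left[OF w(1) \<open>M < cmod w\<close>, of "Re w - t"] t by simp
    next
      fix s
      show "Complex (- X) s \<in> sublevel k"
        using X by (intro N) simp
    next
      fix t assume "t \<in> closed_segment (- X) (- N)"
      then show "of_real t \<in> sublevel k"
        using X by (intro N) (auto simp: closed_segment_eq_real_ivl)
    qed
  qed
qed

lemma unbounded_sublevel: "\<not> bounded (sublevel k)"
proof -
  obtain N where N: "\<And>w. Re w \<le> - N \<Longrightarrow> w \<in> sublevel k"
    using sublevel_contains_left_halfplane[where k = k] by blast
  have "\<exists>w\<in>sublevel k. B < norm w" for B
    using N[of "of_real (- max N (B + 1))"] by (intro bexI[of _ "of_real (- max N (B + 1))"]) auto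
  then show ?thesis
    unfolding bounded_iff by (meson not_le)
qed

end

lemma image_mult_unit:
  fixes d :: complex
  assumes "cmod d = 1"
  shows "(\<lambda>w. w * d) ` {w. P (w * d)} = {z. P z}"
proof -
  have cancel: "z * cnj d * d = z" for z
    using complex_norm_square[of d] assms by (simp add: mult.assoc mult.commute[of "cnj d"])
  show ?thesis
  proof (intro set_eqI iffI)
    fix z assume "z \<in> {z. P z}"
    then show "z \<in> (\<lambda>w. w * d) ` {w. P (w * d)}"
      by (intro image_eqI[of z _ "z * cnj d"]) (simp_all only: cancel mem_Collect_eq)
  qed auto
qed

lemma cs_prob_support_bound:
  assumes "cs_prob m"
  obtains M where "0 < M" "\<And>x. x \<in> msupp m \<Longrightarrow> \<bar>x\<bar> \<le> M" "AE x in m. \<bar>x\<bar> \<le> M"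
proof -
  have "bounded (msupp m)"
    using assms unfolding cs_prob_def by (intro compact_imp_bounded) simp
  then obtain M where M: "0 < M" "\<And>x. x \<in> msupp m \<Longrightarrow> \<bar>x\<bar> \<le> M"
    unfolding bounded_pos by auto
  moreover have "AE x in m. \<bar>x\<bar> \<le> M"
    using msupp_AE[of m] assms unfolding cs_prob_def by (auto elim: AE_mp intro: M(2))
  ultimately show ?thesis
    using that by blast
qed

lemma rotation_to_positive_real:
  fixes u :: complex
  assumes "u \<noteq> 0"
  obtains d where "cmod d = 1" "d * u = of_real (cmod u)"
proof
  show "cmod (cnj u / of_real (cmod u)) = 1"
    using assms by (simp add: norm_divide)
  have "cnj u * u = of_real (cmod u) * of_real (cmod u)"
    using complex_norm_square[of u] by (simp add: power2_eq_square mult.commute)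
  then show "cnj u / of_real (cmod u) * u = of_real (cmod u)"
    using assms by (simp add: field_simps)
qed

lemma ReS_rotated:
  assumes "d * u = of_real (cmod u)"
  shows "ReS m u (w * d) = cmod u * Re w - log_potential m (w * d) - ln (cmod u)"
proof -
  have "Re (w * d * u) = cmod u * Re w"
    using assms by (simp add: mult.assoc)
  then show ?thesis
    unfolding ReS_def log_potential_def by simp
qed

lemma log_growth_rotated_log_potential:
  assumes "cs_prob m" and "u \<noteq> 0" and "cmod d = 1"
    and M: "0 < M" "\<And>x. x \<in> msupp m \<Longrightarrow> \<bar>x\<bar> \<le> M" "AE x in m. \<bar>x\<bar> \<le> M"
  shows "log_growth (cmod u) M (\<lambda>w. log_potential m (w * d)) {w. w * d \<notin> of_real ` msupp m}"
proof
  have prob: "prob_space m" and borel: "sets m = sets borel"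
    using assms(1) unfolding cs_prob_def by auto
  have norm_rot: "cmod (w * d) = cmod w" for w
    using assms(3) by (simp add: norm_mult)
  show "0 < cmod u" "0 \<le> M"
    using assms(2) M(1) by auto
  show "w \<in> {w. w * d \<notin> of_real ` msupp m}" if "M < cmod w" for w
    using that M(2) norm_rot[of w] by (force simp: norm_of_real)
  show "ln (cmod w - M) \<le> log_potential m (w * d) \<and> log_potential m (w * d) \<le> ln (cmod w + M)"
    if "M < cmod w" for w
    using log_potential_bounds[OF prob borel M(3), of "w * d"] that by (simp add: norm_rot)
  show "log_potential m (v * d) - log_potential m (w * d) \<le> cmod (v - w) / (cmod w - M)"
    if "M < cmod w" "M < cmod v" for v w
    using log_potential_diff_le[OF prob borel M(3), of "w * d" "v * d"] that
    by (simp add: norm_rot flip: left_diff_distrib)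
qed

theorem proposition3p4:
  fixes m :: "real measure" and z0 :: complex and c :: real
  assumes "cs_prob m"
    and "z0 \<notin> complex_of_real ` msupp m"
    and "cauchy_G m z0 \<noteq> 0"
  shows "(\<exists>!C. C \<in> components {z. z \<notin> complex_of_real ` msupp m \<and> ReS m (cauchy_G m z0) z > c}
               \<and> \<not> bounded C)
         \<and> (\<exists>!C. C \<in> components {z. z \<notin> complex_of_real ` msupp m \<and> ReS m (cauchy_G m z0) z < c}
               \<and> \<not> bounded C)"
proof -
  define u where "u = cauchy_G m z0"
  obtain M where M: "0 < M" "\<And>x. x \<in> msupp m \<Longrightarrow> \<bar>x\<bar> \<le> M" "AE x in m. \<bar>x\<bar> \<le> M"
    using cs_prob_support_bound[OF assms(1)] by blast
  obtain d where d: "cmod d = 1" "d * u = of_real (cmod u)"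
    using assms(3) unfolding u_def by (rule rotation_to_positive_real)
  interpret log_growth "cmod u" M "\<lambda>w. log_potential m (w * d)" "{w. w * d \<notin> of_real ` msupp m}"
    using log_growth_rotated_log_potential[OF assms(1) _ d(1) M] assms(3) unfolding u_def by simp
  have "superlevel (c + ln (cmod u)) = {w. w * d \<notin> of_real ` msupp m \<and> c < ReS m u (w * d)}"
    and "sublevel (c + ln (cmod u)) = {w. w * d \<notin> of_real ` msupp m \<and> ReS m u (w * d) < c}"
    unfolding superlevel_def sublevel_def ReS_rotated[OF d(2)] by auto
  then have super: "(\<lambda>w. w * d) ` superlevel (c + ln (cmod u)) = {z. z \<notin> of_real ` msupp m \<and> c < ReS m u z}"
    and sub: "(\<lambda>w. w * d) ` sublevel (c + ln (cmod u)) = {z. z \<notin> of_real ` msupp m \<and> ReS m u z < c}"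
    using image_mult_unit[OF d(1), where P = "\<lambda>z. z \<notin> of_real ` msupp m \<and> c < ReS m u z"]
      image_mult_unit[OF d(1), where P = "\<lambda>z. z \<notin> of_real ` msupp m \<and> ReS m u z < c"]
    by simp_all
  have rotation: "continuous_on T (\<lambda>w. w * d)" "cmod (w * d) = cmod w" for T w
    using d(1) by (auto intro: continuous_intros simp: norm_mult)
  show ?thesis
    using unique_unbounded_component_norm_preserving_image[OF rotation
        connected_at_infinity_superlevel unbounded_superlevel, of "c + ln (cmod u)"]
      unique_unbounded_component_norm_preserving_image[OF rotation
        connected_at_infinity_sublevel unbounded_sublevel, of "c + ln (cmod u)"]
    unfolding super sub u_def[symmetric] by (rule conjI)
qed

end
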